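(* If $2\mu\bar c\le\sigma^2 r$, define $g(x)=\frac{\bar c}{r}(1-e^{-\gamma x})$ for $x\ge0$. If $2\mu\bar c>\sigma^2 r$, then there is a unique $y_0>0$ such that $k_1e^{-\lambda_1y_0}-k_2e^{\lambda_2y_0}+\frac{b\bar c}{r}=0$, and define $$g(x)=\begin{cases}k_1e^{\lambda_1(x-y_0)}-k_2e^{-\lambda_2(x-y_0)}+\frac{b\bar c}{r}, & 0\le x\le y_0,\\[1mm] -\frac1\gamma e^{-\gamma(x-y_0)}+\frac{\bar c}{r}, & x>y_0.\end{cases}$$ In both cases $g\in C^2([0,\infty))$ satisfies $-\mathcal Lg-\bar c\,\mathcal Tg=0$ on $[0,\infty)$ and $g(0)=0$; moreover $0\le g\le \bar c/r$, $0\le g'\le g'(0)<\infty$, and $g'$ is strictly decreasing on $[0,\infty)$ (so $g$ is strictly concave). In the second case $g'(y_0)=1$.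
   Context: Constants: $\mu\in\mathbb R$, $\sigma>0$, $r>0$, $\bar c\in(0,\mu]$, $b\in[0,1]$. Operators: $\mathcal L v=\tfrac12\sigma^2v''+\mu v'-rv$, $\mathcal T v=b(1-v')+(1-b)(1-v')^+$. Parameters: $\gamma=\frac{\sqrt{(\mu-\bar c)^2+2\sigma^2 r}+(\mu-\bar c)}{\sigma^2}$, $\lambda_{1}=\frac{\sqrt{(\mu-b\bar c)^2+2\sigma^2 r}-(\mu-b\bar c)}{\sigma^2}$, $\lambda_{2}=\frac{\sqrt{(\mu-b\bar c)^2+2\sigma^2 r}+(\mu-b\bar c)}{\sigma^2}$, $k_1=\frac{1}{\lambda_1+\lambda_2}\big[1+\lambda_2\big(\frac{(1-b)\bar c}{r}-\frac1\gamma\big)\big]$, $k_2=\frac{1}{\lambda_1+\lambda_2}\big[1-\lambda_1\big(\frac{(1-b)\bar c}{r}-\frac1\gamma\big)\big]$. *)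

theory Defs
  imports "HOL-Analysis.Analysis"
begin

definition gam :: "real \<Rightarrow> real \<Rightarrow> real \<Rightarrow> real \<Rightarrow> real" where
  "gam mu sgm r cbar = (sqrt ((mu - cbar)^2 + 2* sgm^2*r) + (mu - cbar)) / sgm^2"

definition lam1 :: "real \<Rightarrow> real \<Rightarrow> real \<Rightarrow> real \<Rightarrow> real \<Rightarrow> real" where
  "lam1 mu sgm r cbar b = (sqrt ((mu - b*cbar)^2 + 2* sgm^2*r) - (mu - b*cbar)) / sgm^2"

definition lam2 :: "real \<Rightarrow> real \<Rightarrow> real \<Rightarrow> real \<Rightarrow> real \<Rightarrow> real" where
  "lam2 mu sgm r cbar b = (sqrt ((mu - b*cbar)^2 + 2* sgm^2*r) + (mu - b*cbar)) / sgm^2"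

definition kk1 :: "real \<Rightarrow> real \<Rightarrow> real \<Rightarrow> real \<Rightarrow> real \<Rightarrow> real" where
  "kk1 mu sgm r cbar b = (1 / (lam1 mu sgm r cbar b + lam2 mu sgm r cbar b)) *
     (1 + lam2 mu sgm r cbar b * ((1 - b)*cbar/r - 1 / gam mu sgm r cbar))"

definition kk2 :: "real \<Rightarrow> real \<Rightarrow> real \<Rightarrow> real \<Rightarrow> real \<Rightarrow> real" where
  "kk2 mu sgm r cbar b = (1 / (lam1 mu sgm r cbar b + lam2 mu sgm r cbar b)) *
     (1 - lam1 mu sgm r cbar b * ((1 - b)*cbar/r - 1 / gam mu sgm r cbar))"

definition opL :: "real \<Rightarrow> real \<Rightarrow> real \<Rightarrow> real \<Rightarrow> real \<Rightarrow> real \<Rightarrow> real" where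
  "opL mu sgm r v v' v'' = sgm^2/2 * v'' + mu * v' - r * v"

definition opT :: "real \<Rightarrow> real \<Rightarrow> real" where
  "opT b v' = b * (1 - v') + (1 - b) * max 0 (1 - v')"

definition g_case2 :: "real \<Rightarrow> real \<Rightarrow> real \<Rightarrow> real \<Rightarrow> real \<Rightarrow> real \<Rightarrow> real \<Rightarrow> real" where
  "g_case2 mu sgm r cbar b y0 x =
     (if x \<le> y0 then kk1 mu sgm r cbar b * exp (lam1 mu sgm r cbar b * (x - y0))
                      - kk2 mu sgm r cbar b * exp (- lam2 mu sgm r cbar b * (x - y0)) + b*cbar/r
      else - (1 / gam mu sgm r cbar) * exp (- gam mu sgm r cbar * (x - y0)) + cbar / r)"

definition good_sol :: "real \<Rightarrow> real \<Rightarrow> real \<Rightarrow> real \<Rightarrow> real \<Rightarrow>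
    (real \<Rightarrow> real) \<Rightarrow> (real \<Rightarrow> real) \<Rightarrow> (real \<Rightarrow> real) \<Rightarrow> bool" where
  "good_sol mu sgm r cbar b g g' g'' \<longleftrightarrow>
     (\<forall>x\<ge>0. (g has_real_derivative g' x) (at x within {0..})
            \<and> (g' has_real_derivative g'' x) (at x within {0..}))
   \<and> continuous_on {0..} g''
   \<and> (\<forall>x\<ge>0. - opL mu sgm r (g x) (g' x) (g'' x) - cbar * opT b (g' x) = 0)
   \<and> g 0 = 0
   \<and> (\<forall>x\<ge>0. 0 \<le> g x \<and> g x \<le> cbar / r)
   \<and> (\<forall>x\<ge>0. 0 \<le> g' x \<and> g' x \<le> g' 0)
   \<and> (\<forall>x y. 0 \<le> x \<longrightarrow> x < y \<longrightarrow> g' y < g' x)"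

end

theory Submission
  imports Defs
begin

text \<open>Where g' \<le> 1 the equation -L g - cbar T g = 0 reads -L g = cbar (1 - g'), where
  g' \<ge> 1 it reads -L g = b cbar (1 - g'); gam, lam1 and lam2 are positive roots of the
  characteristic polynomials of these two linear ODEs. The sign of the first polynomial at
  r/cbar shows that cbar gam \<le> r exactly when 2 mu cbar \<le> sgm^2 r. In that case
  (cbar/r)(1 - exp(-gam x)) has slope cbar gam/r \<le> 1 at 0 and solves the first ODE.
  Otherwise the solution of the first ODE with slope 1 at y0 is continued to the left by
  the solution G(x - y0) of the second one; k1 and k2 are exactly the coefficients for which
  value, slope and curvature agree at y0. The curvature of G stays negative to the left, so
  G has slope \<ge> 1 there, and y0 is fixed by the requirement g(0) = G(-y0) = 0.\<close>

lemma quadratic_sqrt_roots: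
  fixes a w r :: real
  assumes w: "w > 0" and r: "r > 0"
  defines "s \<equiv> sqrt (a^2 + 2*w^2*r)"
  defines "p \<equiv> (s + a)/w^2" and "q \<equiv> (s - a)/w^2"
  shows "p > 0" "q > 0" "w^2/2*p^2 - a*p - r = 0" "w^2/2*q^2 + a*q - r = 0"
    "p*q = 2*r/w^2" "q - p = -2*a/w^2"
proof -
  have s2: "s^2 = a^2 + 2*w^2*r" unfolding s_def using w r by simp
  have "sqrt (a^2) < s" unfolding s_def using w r by (intro real_sqrt_less_mono) simp
  then have sa: "\<bar>a\<bar> < s" by simp
  show "p > 0" "q > 0" unfolding p_def q_def using sa w by auto
  show "w^2/2*p^2 - a*p - r = 0" unfolding p_def using w s2
    by (simp add: field_simps power2_eq_square; simp add: algebra_simps power2_eq_square)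
  show "w^2/2*q^2 + a*q - r = 0" unfolding q_def using w s2
    by (simp add: field_simps power2_eq_square; simp add: algebra_simps power2_eq_square)
  show "p*q = 2*r/w^2" unfolding p_def q_def using w s2
    by (simp add: field_simps power2_eq_square; simp add: algebra_simps power2_eq_square)
  show "q - p = -2*a/w^2" unfolding p_def q_def using w
    by (simp add: field_simps)
qed

lemma has_real_derivative_if_le:
  fixes f g df dg :: "real \<Rightarrow> real"
  assumes "\<And>x. (f has_real_derivative df x) (at x)" "\<And>x. (g has_real_derivative dg x) (at x)"
    and "f a = g a" "df a = dg a"
  shows "((\<lambda>x. if x \<le> a then f x else g x) has_real_derivative
           (if x \<le> a then df x else dg x)) (at x)"
proof -
  have "((\<lambda>x. if x \<in> {..a} then f x else g x) has_vector_derivative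
          (if x \<in> {..a} then df x else dg x)) (at x within UNIV)"
    by (rule has_vector_derivative_If_within_closures[where T="{a<..}"])
      (use assms in \<open>auto simp: has_real_derivative_iff_has_vector_derivative[symmetric]
                         intro: has_field_derivative_at_within\<close>)
  then show ?thesis by (simp add: has_real_derivative_iff_has_vector_derivative)
qed

lemma has_real_derivative_diff_const: "((\<lambda>x. x - y0) has_real_derivative 1) (at x)"
  by (auto intro!: derivative_eq_intros)

lemma opT_if_le_1: "v' \<le> 1 \<Longrightarrow> opT b v' = 1 - v'"
  by (simp add: opT_def algebra_simps)

lemma opT_if_ge_1: "1 \<le> v' \<Longrightarrow> opT b v' = b*(1 - v')"
  by (simp add: opT_def)

locale exp_branch =
  fixes k1 k2 l1 l2 gm c :: real
  assumes l1_pos: "0 < l1" and l2_pos: "0 < l2" and gm_pos: "0 < gm"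
    and slope_at_0: "k1*l1 + k2*l2 = 1"
    and curvature_at_0: "k1*l1^2 - k2*l2^2 = -gm"
begin

definition G :: "real \<Rightarrow> real" where
  "G t = k1*exp (l1*t) - k2*exp (-l2*t) + c"

definition G' :: "real \<Rightarrow> real" where
  "G' t = k1*l1*exp (l1*t) + k2*l2*exp (-l2*t)"

definition G'' :: "real \<Rightarrow> real" where
  "G'' t = k1*l1^2*exp (l1*t) - k2*l2^2*exp (-l2*t)"

lemma has_real_derivative_G: "(G has_real_derivative G' t) (at t)"
  unfolding G_def G'_def by (auto intro!: derivative_eq_intros simp: algebra_simps)

lemma has_real_derivative_G': "(G' has_real_derivative G'' t) (at t)"
  unfolding G'_def G''_def
  by (auto intro!: derivative_eq_intros simp: algebra_simps power2_eq_square)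

lemma G'_0: "G' 0 = 1"
  using slope_at_0 by (simp add: G'_def)

lemma G''_0: "G'' 0 = -gm"
  using curvature_at_0 by (simp add: G''_def)

lemma k2_pos: "0 < k2"
proof (rule ccontr)
  assume "\<not> 0 < k2"
  then have "k2*l2 \<le> 0" "k2*l2^2 \<le> 0" using l2_pos by (auto simp: mult_nonpos_nonneg)
  then have "k1*l1 \<ge> 1" using slope_at_0 by linarith
  then have "k1 > 0" using l1_pos by (smt (verit) mult_nonpos_nonneg)
  then have "k1*l1^2 > 0" using l1_pos by simp
  then show False using curvature_at_0 gm_pos \<open>k2*l2^2 \<le> 0\<close> by linarith
qed

lemma G''_neg:
  assumes "t \<le> 0"
  shows "G'' t < 0"
proof (cases "k1 \<ge> 0")
  case True
  have "exp (l1*t) \<le> 1" using assms l1_pos by (simp add: mult_nonneg_nonpos)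
  then have "k1*l1^2*exp (l1*t) \<le> k1*l1^2" using True by (simp add: mult_left_le)
  moreover have "exp (-l2*t) \<ge> 1" using assms l2_pos by (simp add: mult_nonneg_nonpos)
  then have "k2*l2^2 \<le> k2*l2^2*exp (-l2*t)"
    using mult_left_mono[of 1 "exp (-l2*t)" "k2*l2^2"] k2_pos by simp
  ultimately show ?thesis unfolding G''_def using curvature_at_0 gm_pos by linarith
next
  case False
  then have "k1*l1^2*exp (l1*t) < 0" using l1_pos by (simp add: mult_neg_pos)
  moreover have "k2*l2^2*exp (-l2*t) > 0" using k2_pos l2_pos by simp
  ultimately show ?thesis unfolding G''_def by linarith
qed

lemma G'_strict_antimono: "s < t \<Longrightarrow> t \<le> 0 \<Longrightarrow> G' t < G' s"
  by (rule DERIV_neg_imp_decreasing[of s t G'])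
    (auto intro!: has_real_derivative_G' G''_neg exI[of _ "G'' _"])

lemma G'_ge_1: "t \<le> 0 \<Longrightarrow> 1 \<le> G' t"
  using G'_strict_antimono[of t 0] G'_0 by (cases "t = 0") auto

lemma G_strict_mono: "s < t \<Longrightarrow> t \<le> 0 \<Longrightarrow> G s < G t"
  by (rule DERIV_pos_imp_increasing[of s t G])
    (auto intro!: has_real_derivative_G exI[of _ "G' _"] order.strict_trans2[OF _ G'_ge_1])

lemma G_le_G_0_plus: "t \<le> 0 \<Longrightarrow> G t \<le> G 0 + t"
proof (cases "t = 0")
  case False
  assume "t \<le> 0"
  with False obtain z where z: "t < z" "z < 0" "G 0 - G t = (0 - t) * G' z"
    using MVT2[of t 0 G G'] has_real_derivative_G by force
  have "-t \<le> (0 - t) * G' z" using G'_ge_1[of z] z by (simp add: mult_le_cancel_left1)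
  then show ?thesis using z by linarith
qed simp

lemma G_unique_neg_root:
  assumes "0 < G 0"
  shows "\<exists>!y. 0 < y \<and> G (-y) = 0"
proof (rule ex_ex1I)
  have "G (- G 0) \<le> 0" using G_le_G_0_plus[of "- G 0"] assms by simp
  moreover have "isCont G t" for t using has_real_derivative_G by (rule DERIV_isCont)
  ultimately have "\<exists>y. 0 \<le> y \<and> y \<le> G 0 \<and> G (-y) = 0"
    using assms by (intro IVT2) (auto intro!: continuous_intros isCont_o2[where f=uminus])
  then obtain y where "0 \<le> y" "G (-y) = 0" by blast
  moreover have "y \<noteq> 0" using \<open>G (-y) = 0\<close> assms by auto
  ultimately show "\<exists>y. 0 < y \<and> G (-y) = 0" by (intro exI[of _ y]) auto
next
  fix y z assume "0 < y \<and> G (-y) = 0" "0 < z \<and> G (-z) = 0"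
  then show "y = z" using G_strict_mono[of "-y" "-z"] G_strict_mono[of "-z" "-y"]
    by (cases y z rule: linorder_cases) auto
qed

end

locale control_params =
  fixes mu sgm r cbar b :: real
  assumes sgm_pos: "0 < sgm" and r_pos: "0 < r" and cbar_pos: "0 < cbar"
begin

abbreviation "gm \<equiv> gam mu sgm r cbar"
abbreviation "l1 \<equiv> lam1 mu sgm r cbar b"
abbreviation "l2 \<equiv> lam2 mu sgm r cbar b"
abbreviation "k1 \<equiv> kk1 mu sgm r cbar b"
abbreviation "k2 \<equiv> kk2 mu sgm r cbar b"

lemma gam_pos: "0 < gm"
  and gam_char_eq: "sgm^2/2*gm^2 - (mu - cbar)*gm - r = 0"
  using quadratic_sqrt_roots[OF sgm_pos r_pos, of "mu - cbar"] by (auto simp: gam_def)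

lemma lam_pos: "0 < l1" "0 < l2"
  and lam_char_eq: "sgm^2/2*l1^2 + (mu - b*cbar)*l1 - r = 0"
    "sgm^2/2*l2^2 - (mu - b*cbar)*l2 - r = 0"
  and lam_prod: "l2*l1 = 2*r/sgm^2"
  and lam_diff: "l1 - l2 = -2*(mu - b*cbar)/sgm^2"
  using quadratic_sqrt_roots[OF sgm_pos r_pos, of "mu - b*cbar"]
  by (auto simp: lam1_def lam2_def)

lemma cbar_gam_le_iff: "cbar*gm \<le> r \<longleftrightarrow> 2*mu*cbar \<le> sgm^2*r"
proof -
  define q where "q = (sqrt ((mu - cbar)^2 + 2 * sgm^2*r) - (mu - cbar))/sgm^2"
  note roots = quadratic_sqrt_roots[OF sgm_pos r_pos, of "mu - cbar", folded gam_def q_def]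
  define x where "x = r/cbar"
  have "sgm^2/2*(x + q)*(x - gm) = sgm^2/2*x^2 + sgm^2/2*(q - gm)*x - sgm^2/2*(gm*q)"
    by (simp add: field_simps power2_eq_square)
  also have "\<dots> = r/(2*cbar^2)*(sgm^2*r - 2*cbar*mu)"
    unfolding roots(5) roots(6)[unfolded mult.commute[of q]] x_def
    using sgm_pos cbar_pos by (simp add: field_simps power2_eq_square)
  finally have factor: "sgm^2/2*(x + q)*(x - gm) = r/(2*cbar^2)*(sgm^2*r - 2*cbar*mu)" .
  have "0 < sgm^2/2*(x + q)" "0 < r/(2*cbar^2)"
    using sgm_pos r_pos cbar_pos roots(2) by (simp_all add: x_def add_pos_pos)
  then have "0 \<le> x - gm \<longleftrightarrow> 0 \<le> sgm^2*r - 2*cbar*mu"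
    using factor by (metis zero_le_mult_iff not_le less_imp_le)
  then show ?thesis using r_pos cbar_pos by (simp add: x_def field_simps mult_ac)
qed

lemma good_sol_case1:
  assumes "cbar*gm \<le> r"
  shows "good_sol mu sgm r cbar b (\<lambda>x. cbar/r * (1 - exp (- gm*x)))
           (\<lambda>x. cbar/r*gm*exp (-gm*x)) (\<lambda>x. -(cbar/r*gm^2)*exp (-gm*x))"
  unfolding good_sol_def
proof (intro conjI allI impI)
  fix x :: real assume "0 \<le> x"
  then have exp_le_1: "exp (-gm*x) \<le> 1" using gam_pos by simp
  show "((\<lambda>x. cbar/r * (1 - exp (- gm*x))) has_real_derivative cbar/r*gm*exp (-gm*x))
          (at x within {0..})"
    using r_pos by (auto intro!: derivative_eq_intros)
  show "((\<lambda>x. cbar/r*gm*exp (-gm*x)) has_real_derivative -(cbar/r*gm^2)*exp (-gm*x))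
          (at x within {0..})"
    using r_pos by (auto intro!: derivative_eq_intros simp: power2_eq_square)
  have slope_le: "cbar/r*gm*exp (-gm*x) \<le> cbar/r*gm"
    using mult_left_mono[OF exp_le_1, of "cbar/r*gm"] cbar_pos r_pos gam_pos by simp
  then show "cbar/r*gm*exp (-gm*x) \<le> cbar/r*gm*exp (-gm*0)" by simp
  have "cbar/r*gm \<le> 1" using assms r_pos by (simp add: field_simps)
  then have "opT b (cbar/r*gm*exp (-gm*x)) = 1 - cbar/r*gm*exp (-gm*x)"
    using slope_le by (intro opT_if_le_1) linarith
  moreover have "- opL mu sgm r (cbar/r * (1 - exp (- gm*x))) (cbar/r*gm*exp (-gm*x))
                   (-(cbar/r*gm^2)*exp (-gm*x)) - cbar*(1 - cbar/r*gm*exp (-gm*x))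
      = cbar/r*exp (-gm*x)*(sgm^2/2*gm^2 - (mu - cbar)*gm - r)"
    unfolding opL_def using r_pos by (simp add: field_simps)
  ultimately show "- opL mu sgm r (cbar/r * (1 - exp (- gm*x))) (cbar/r*gm*exp (-gm*x))
                     (-(cbar/r*gm^2)*exp (-gm*x)) - cbar * opT b (cbar/r*gm*exp (-gm*x)) = 0"
    using gam_char_eq by simp
  show "0 \<le> cbar/r * (1 - exp (- gm*x))" using exp_le_1 cbar_pos r_pos by simp
  show "cbar/r * (1 - exp (- gm*x)) \<le> cbar/r" using cbar_pos r_pos by (simp add: field_simps)
  show "0 \<le> cbar/r*gm*exp (-gm*x)" using cbar_pos r_pos gam_pos by simp
next
  show "continuous_on {0..} (\<lambda>x. -(cbar/r*gm^2)*exp (-gm*x))" by (intro continuous_intros)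
next
  fix x y :: real assume "0 \<le> x" "x < y"
  then have "exp (-gm*y) < exp (-gm*x)" using gam_pos by simp
  then show "cbar/r*gm*exp (-gm*y) < cbar/r*gm*exp (-gm*x)"
    using cbar_pos r_pos gam_pos by (intro mult_strict_left_mono) auto
qed simp

lemma kk_identities:
  "k1 - k2 = (1 - b)*cbar/r - 1/gm"
  "k1*l1 + k2*l2 = 1"
  "k1*l1^2 - k2*l2^2 = -gm"
proof -
  define A where "A = (1 - b)*cbar/r - 1/gm"
  define D where "D = l1 + l2"
  have D_pos: "0 < D" using lam_pos by (simp add: D_def)
  have k1: "k1 = (1 + l2*A)/D" and k2: "k2 = (1 - l1*A)/D"
    by (simp_all add: kk1_def kk2_def A_def D_def)
  have "(1 + l2*A) - (1 - l1*A) = D*A" by (simp add: D_def algebra_simps)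
  then show "k1 - k2 = (1 - b)*cbar/r - 1/gm"
    unfolding k1 k2 A_def[symmetric] using D_pos by (simp add: diff_divide_distrib[symmetric])
  have "(1 + l2*A)*l1 + (1 - l1*A)*l2 = D" by (simp add: D_def algebra_simps)
  then show "k1*l1 + k2*l2 = 1" unfolding k1 k2 using D_pos by (simp add: field_simps)
  have r_div_gam: "r/gm = sgm^2/2*gm - (mu - cbar)"
    using gam_char_eq gam_pos by (simp add: field_simps power2_eq_square)
  have "k1*l1^2 - k2*l2^2 = ((1 + l2*A)*l1^2 - (1 - l1*A)*l2^2)/D"
    unfolding k1 k2 using D_pos by (simp add: field_simps)
  also have "(1 + l2*A)*l1^2 - (1 - l1*A)*l2^2 = D*((l1 - l2) + (l2*l1)*A)"
    by (simp add: D_def algebra_simps power2_eq_square)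
  also have "(l1 - l2) + (l2*l1)*A = 2/sgm^2*(-(mu - cbar) - r/gm)"
    unfolding lam_diff lam_prod A_def using sgm_pos r_pos by (simp add: field_simps)
  also have "\<dots> = -gm" unfolding r_div_gam using sgm_pos by (simp add: field_simps)
  finally show "k1*l1^2 - k2*l2^2 = -gm" using D_pos by simp
qed

sublocale exp_branch k1 k2 l1 l2 gm "b*cbar/r"
  using lam_pos gam_pos kk_identities by unfold_locales auto

lemma G_0: "G 0 = cbar/r - 1/gm"
  using kk_identities(1) r_pos by (simp add: G_def field_simps)

lemma G_0_pos: "sgm^2*r < 2*mu*cbar \<Longrightarrow> 0 < G 0"
proof -
  assume "sgm^2*r < 2*mu*cbar"
  then have "r < cbar*gm" using cbar_gam_le_iff by simp
  then have "1/gm < cbar/r" using gam_pos r_pos by (simp add: field_simps)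
  then show "0 < G 0" using G_0 by simp
qed

lemma root_eq_G: "k1*exp (-l1*y) - k2*exp (l2*y) + b*cbar/r = G (-y)"
  by (simp add: G_def)

definition dg_case2 :: "real \<Rightarrow> real \<Rightarrow> real" where
  "dg_case2 y0 x = (if x \<le> y0 then G' (x - y0) else exp (-gm*(x - y0)))"

definition d2g_case2 :: "real \<Rightarrow> real \<Rightarrow> real" where
  "d2g_case2 y0 x = (if x \<le> y0 then G'' (x - y0) else -gm*exp (-gm*(x - y0)))"

lemma g_case2_eq:
  "g_case2 mu sgm r cbar b y0 =
     (\<lambda>x. if x \<le> y0 then G (x - y0) else cbar/r - exp (-gm*(x - y0))/gm)"
  by (simp add: g_case2_def G_def fun_eq_iff)

lemma has_real_derivative_g_case2:
  "(g_case2 mu sgm r cbar b y0 has_real_derivative dg_case2 y0 x) (at x)"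
  unfolding g_case2_eq dg_case2_def
proof (rule has_real_derivative_if_le)
  show "((\<lambda>x. G (x - y0)) has_real_derivative G' (x - y0)) (at x)" for x
    using DERIV_chain2[OF has_real_derivative_G has_real_derivative_diff_const] by simp
  show "((\<lambda>x. cbar/r - exp (-gm*(x - y0))/gm) has_real_derivative exp (-gm*(x - y0))) (at x)"
    for x using gam_pos by (auto intro!: derivative_eq_intros)
qed (use G_0 G'_0 in simp_all)

lemma has_real_derivative_dg_case2: "(dg_case2 y0 has_real_derivative d2g_case2 y0 x) (at x)"
  unfolding dg_case2_def d2g_case2_def
proof (rule has_real_derivative_if_le)
  show "((\<lambda>x. G' (x - y0)) has_real_derivative G'' (x - y0)) (at x)" for x
    using DERIV_chain2[OF has_real_derivative_G' has_real_derivative_diff_const] by simp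
  show "((\<lambda>x. exp (-gm*(x - y0))) has_real_derivative -gm*exp (-gm*(x - y0))) (at x)" for x
    by (auto intro!: derivative_eq_intros)
qed (use G'_0 G''_0 in simp_all)

lemma continuous_on_d2g_case2: "continuous_on A (d2g_case2 y0)"
  unfolding d2g_case2_def
  by (rule continuous_on_cases_le) (auto intro!: continuous_intros simp: G''_def curvature_at_0)

lemma dg_case2_y0: "dg_case2 y0 y0 = 1"
  by (simp add: dg_case2_def G'_0)

lemma dg_case2_pos: "0 < dg_case2 y0 x"
  using G'_ge_1[of "x - y0"] by (auto simp: dg_case2_def)

lemma dg_case2_strict_antimono:
  assumes "x < y"
  shows "dg_case2 y0 y < dg_case2 y0 x"
proof (cases "y \<le> y0")
  case True
  then show ?thesis using G'_strict_antimono[of "x - y0" "y - y0"] assms by (simp add: dg_case2_def)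
next
  case False
  then have "dg_case2 y0 y < 1" using gam_pos by (simp add: dg_case2_def)
  moreover have "1 \<le> dg_case2 y0 x" if "x \<le> y0"
    using that G'_ge_1[of "x - y0"] by (simp add: dg_case2_def)
  moreover have "dg_case2 y0 y < dg_case2 y0 x" if "\<not> x \<le> y0"
    using that False assms gam_pos by (simp add: dg_case2_def)
  ultimately show ?thesis by force
qed

lemma ode_g_case2:
  "- opL mu sgm r (g_case2 mu sgm r cbar b y0 x) (dg_case2 y0 x) (d2g_case2 y0 x)
     - cbar * opT b (dg_case2 y0 x) = 0"
proof (cases "x \<le> y0")
  case True
  define E1 where "E1 = exp (l1*(x - y0))"
  define E2 where "E2 = exp (-l2*(x - y0))"
  have T: "opT b (dg_case2 y0 x) = b*(1 - dg_case2 y0 x)"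
    using G'_ge_1[of "x - y0"] True by (intro opT_if_ge_1) (simp add: dg_case2_def)
  have branch_values: "g_case2 mu sgm r cbar b y0 x = k1*E1 - k2*E2 + b*cbar/r"
    "dg_case2 y0 x = k1*l1*E1 + k2*l2*E2" "d2g_case2 y0 x = k1*l1^2*E1 - k2*l2^2*E2"
    using True by (simp_all add: g_case2_eq dg_case2_def d2g_case2_def G_def G'_def G''_def
        E1_def E2_def)
  have "- opL mu sgm r (g_case2 mu sgm r cbar b y0 x) (dg_case2 y0 x) (d2g_case2 y0 x)
                   - cbar*(b*(1 - dg_case2 y0 x))
      = - k1*E1*(sgm^2/2*l1^2 + (mu - b*cbar)*l1 - r) + k2*E2*(sgm^2/2*l2^2 - (mu - b*cbar)*l2 - r)"
    unfolding opL_def branch_values using r_pos by (simp add: field_simps)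
  then show ?thesis unfolding T using lam_char_eq by simp
next
  case False
  define E where "E = exp (-gm*(x - y0))"
  have "E < 1" using False gam_pos by (simp add: E_def)
  then have T: "opT b (dg_case2 y0 x) = 1 - dg_case2 y0 x"
    using False by (intro opT_if_le_1) (simp add: dg_case2_def E_def)
  have branch_values: "g_case2 mu sgm r cbar b y0 x = cbar/r - E/gm"
    "dg_case2 y0 x = E" "d2g_case2 y0 x = -gm*E"
    using False by (simp_all add: g_case2_eq dg_case2_def d2g_case2_def E_def)
  have "- opL mu sgm r (g_case2 mu sgm r cbar b y0 x) (dg_case2 y0 x) (d2g_case2 y0 x)
          - cbar*(1 - dg_case2 y0 x) = E/gm*(sgm^2/2*gm^2 - (mu - cbar)*gm - r)"
    unfolding opL_def branch_values using r_pos gam_pos by (simp add: field_simps power2_eq_square)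
  then show ?thesis unfolding T using gam_char_eq by simp
qed

lemma good_sol_case2:
  assumes "0 < y0" and "G (-y0) = 0"
  shows "good_sol mu sgm r cbar b (g_case2 mu sgm r cbar b y0) (dg_case2 y0) (d2g_case2 y0)"
  unfolding good_sol_def
proof (intro conjI allI impI)
  let ?g = "g_case2 mu sgm r cbar b y0"
  have g_0: "?g 0 = 0" using assms by (simp add: g_case2_eq)
  have g_strict_mono: "?g x < ?g y" if "x < y" for x y
    using that by (intro DERIV_pos_imp_increasing[of x y ?g])
      (auto intro!: has_real_derivative_g_case2 dg_case2_pos exI[of _ "dg_case2 y0 _"])
  show "?g 0 = 0" by (rule g_0)
  fix x :: real assume "0 \<le> x"
  show "(?g has_real_derivative dg_case2 y0 x) (at x within {0..})"
    using has_real_derivative_g_case2 by (rule has_field_derivative_at_within)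
  show "(dg_case2 y0 has_real_derivative d2g_case2 y0 x) (at x within {0..})"
    using has_real_derivative_dg_case2 by (rule has_field_derivative_at_within)
  show "0 \<le> ?g x" using g_strict_mono[of 0 x] g_0 \<open>0 \<le> x\<close> by (cases "x = 0") auto
  show "?g x \<le> cbar/r"
  proof (cases "x \<le> y0")
    case True
    then have "?g x \<le> ?g y0" using g_strict_mono[of x y0] by (cases "x = y0") auto
    also have "?g y0 = cbar/r - 1/gm" using G_0 by (simp add: g_case2_eq)
    finally show ?thesis using gam_pos by (smt (verit) divide_pos_pos)
  qed (use gam_pos in \<open>simp add: g_case2_eq\<close>)
  show "0 \<le> dg_case2 y0 x" using dg_case2_pos less_imp_le by blast
  show "dg_case2 y0 x \<le> dg_case2 y0 0"
    using dg_case2_strict_antimono[of 0 x y0] \<open>0 \<le> x\<close> by (cases "x = 0") auto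
  show "- opL mu sgm r (?g x) (dg_case2 y0 x) (d2g_case2 y0 x) - cbar * opT b (dg_case2 y0 x) = 0"
    by (rule ode_g_case2)
next
  fix x y :: real assume "0 \<le> x" "x < y"
  then show "dg_case2 y0 y < dg_case2 y0 x" by (simp add: dg_case2_strict_antimono)
qed (rule continuous_on_d2g_case2)

end

theorem lemma3p3:
  fixes mu sgm r cbar b :: real
  assumes "sgm > 0" and "r > 0" and "0 < cbar" and "cbar \<le> mu" and "0 \<le> b" and "b \<le> 1"
  shows "(2*mu*cbar \<le> sgm^2*r \<longrightarrow>
            (\<exists>g' g''. good_sol mu sgm r cbar b
                (\<lambda>x. cbar / r * (1 - exp (- gam mu sgm r cbar * x))) g' g''))
       \<and> (2*mu*cbar > sgm^2*r \<longrightarrow>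
            (\<exists>!y0. y0 > 0 \<and> kk1 mu sgm r cbar b * exp (- lam1 mu sgm r cbar b * y0)
                     - kk2 mu sgm r cbar b * exp (lam2 mu sgm r cbar b * y0) + b*cbar/r = 0)
          \<and> (\<forall>y0. y0 > 0 \<and> kk1 mu sgm r cbar b * exp (- lam1 mu sgm r cbar b * y0)
                     - kk2 mu sgm r cbar b * exp (lam2 mu sgm r cbar b * y0) + b*cbar/r = 0
                \<longrightarrow> (\<exists>g' g''. good_sol mu sgm r cbar b (g_case2 mu sgm r cbar b y0) g' g''
                               \<and> g' y0 = 1)))"
proof -
  interpret control_params mu sgm r cbar b
    using assms(1-3) by unfold_locales
  have "2*mu*cbar \<le> sgm^2*r \<Longrightarrow> \<exists>g' g''. good_sol mu sgm r cbar b
          (\<lambda>x. cbar / r * (1 - exp (- gm * x))) g' g''"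
    using good_sol_case1 cbar_gam_le_iff by blast
  moreover have "\<exists>!y0. y0 > 0 \<and> G (-y0) = 0" if "2*mu*cbar > sgm^2*r"
    using G_unique_neg_root[OF G_0_pos[OF that]] by simp
  moreover have "\<exists>g' g''. good_sol mu sgm r cbar b (g_case2 mu sgm r cbar b y0) g' g'' \<and> g' y0 = 1"
    if "y0 > 0" "G (-y0) = 0" for y0
    using good_sol_case2[OF that] dg_case2_y0 by blast
  ultimately show ?thesis unfolding root_eq_G by auto
qed

end
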